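(* Let $\varkappa>0$, $n\in\mathbb{N}$, and $z_j=e^{i\arg z_j}$, $j=1,\dots,n$, distinct points of $\mathbb{T}$. Let $g$ be analytic in $\Delta$ such that (1) there are $c_0>0$, $r_0\in(0,1)$ with $|g(z)|\ge c_0$ whenever $r_0<|z|<1$; and (2) for each $j$ there are $r_j\in(0,1)$, $\vartheta_j>0$, $C_j>0$ with $|g(z)|\le C_j$ on $\Omega_j=\{re^{i\theta}:r_j<r<1,\ \arg z_j-\vartheta_j<\theta<\arg z_j+\vartheta_j\}$, where $\Omega_{j_1}\cap\Omega_{j_2}=\emptyset$ for $j_1\ne j_2$. Let $f(z)=\prod_{j=1}^n(z-z_j)g(z)$. Then, as $r\to1^-$, $\int_{-\pi}^{\pi}\frac{d\theta}{|f(re^{i\theta})|^\varkappa}\asymp\frac{1}{(1-r)^{\varkappa-1}}$ if $\varkappa>1$, $\asymp\log\frac{1}{1-r}$ if $\varkappa=1$, and $\asymp1$ if $\varkappa\in(0,1)$.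
   Context: $\Delta$ unit disk, $\mathbb{T}=\partial\Delta$. For positive functions $A(r),B(r)$, $A\asymp B$ as $r\to1^-$ means there are constants $0<c_1\le c_2$ with $c_1A(r)\le B(r)\le c_2A(r)$ for all $r$ sufficiently close to $1$. *)

theory Defs
  imports "HOL-Complex_Analysis.Complex_Analysis"
begin

definition asymp_near1 :: "(real \<Rightarrow> real) \<Rightarrow> (real \<Rightarrow> real) \<Rightarrow> bool" where
  "asymp_near1 A B \<longleftrightarrow> (\<exists>c1 c2. 0 < c1 \<and> c1 \<le> c2 \<and>
      (\<forall>\<^sub>F r in at_left 1. c1 * A r \<le> B r \<and> B r \<le> c2 * A r))"

definition sector :: "real \<Rightarrow> real \<Rightarrow> real \<Rightarrow> complex set" where
  "sector rj a t = {complex_of_real \<rho> * exp (\<i> * complex_of_real \<theta>) | \<rho> \<theta>.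
      rj < \<rho> \<and> \<rho> < 1 \<and> a - t < \<theta> \<and> \<theta> < a + t}"

end

theory Submission
  imports Defs
begin

text \<open>Write \<open>J(e, T)\<close> for the integral of \<open>(e + t) powr -\<kappa>\<close> over \<open>0 \<le> t \<le> T\<close>.
  Near the unit circle \<open>\<bar>g\<bar>\<close> is bounded below, and since the points \<open>z\<^sub>j\<close> are separated,
  \<open>\<Prod>\<^sub>j \<bar>z - z\<^sub>j\<bar>\<close> is bounded below by a constant times the distance from \<open>z\<close> to the nearest
  \<open>z\<^sub>j\<close>. As \<open>\<bar>rcis r \<theta> - cis b\<bar>\<close> is comparable to \<open>(1 - r) + \<bar>\<theta> - b\<bar>\<close>, the angle taken
  modulo \<open>2\<pi>\<close>, the integral is at most a constant times \<open>J(1 - r, 4\<pi>)\<close>. Conversely, on the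
  sector at \<open>z\<^sub>1\<close> we have \<open>\<bar>f z\<bar> \<le> M \<bar>z - z\<^sub>1\<bar>\<close>, so integrating over a fixed arc of length
  \<open>\<eta>\<close> with an endpoint at \<open>Arg z\<^sub>1\<close> bounds the integral below by a constant times \<open>J(1 - r, \<eta>)\<close>.
  For fixed \<open>T\<close>, \<open>J(e, T)\<close> is comparable to \<open>e powr (1 - \<kappa>)\<close>, \<open>ln (1 / e)\<close> or \<open>1\<close> as
  \<open>e \<rightarrow> 0\<close>, according as \<open>\<kappa> > 1\<close>, \<open>\<kappa> = 1\<close> or \<open>\<kappa> < 1\<close>.\<close>

lemma abs_sin_ge_third:
  fixes v :: real
  assumes "\<bar>v\<bar> \<le> 2"
  shows "\<bar>v\<bar> / 3 \<le> \<bar>sin v\<bar>"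
proof -
  have taylor: "\<bar>sin v - (\<Sum>m<3. sin_coeff m * v ^ m)\<bar> \<le> inverse (fact 3) * \<bar>v\<bar> ^ 3"
    by (rule Maclaurin_sin_bound)
  have "(\<Sum>m<3. sin_coeff m * v ^ m) = v"
    by (simp add: eval_nat_numeral sin_coeff_def)
  moreover have "\<bar>v\<bar> ^ 3 \<le> 4 * \<bar>v\<bar>"
  proof -
    have "\<bar>v\<bar>\<^sup>2 \<le> 2\<^sup>2" using assms by (intro power_mono) auto
    then show ?thesis by (simp add: power3_eq_cube power2_eq_square mult_right_mono)
  qed
  ultimately have "\<bar>sin v - v\<bar> \<le> 2 * \<bar>v\<bar> / 3" using taylor by (simp add: fact_numeral)
  then show ?thesis by linarith
qed

lemma norm_cis_diff: "norm (cis \<theta> - cis b) = 2 * \<bar>sin ((\<theta> - b) / 2)\<bar>"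
proof -
  have "cis \<theta> - cis b = cis b * (cis (\<theta> - b) - 1)"
    by (simp add: algebra_simps cis_mult)
  then have "norm (cis \<theta> - cis b) = norm (cis (\<theta> - b) - 1)"
    by (simp add: norm_mult)
  then show ?thesis by (simp only: cis_conv_exp dist_exp_i_1)
qed

text \<open>Away from the diagonal the chord is compared with the arc through the reflection
  \<open>sin (\<pi> - t) = sin t\<close>, since Taylor's bound only covers \<open>\<bar>t\<bar> \<le> 2\<close>.\<close>
lemma norm_cis_diff_ge:
  assumes "\<bar>\<theta> - b\<bar> \<le> 2 * pi"
  shows "min \<bar>\<theta> - b\<bar> (2 * pi - \<bar>\<theta> - b\<bar>) / 3 \<le> norm (cis \<theta> - cis b)"
proof -
  define t where "t = \<bar>(\<theta> - b) / 2\<bar>"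
  have t: "0 \<le> t" "t \<le> pi" using assms by (auto simp: t_def)
  have "\<bar>sin x\<bar> = \<bar>sin \<bar>x\<bar>\<bar>" for x :: real
    by (cases "0 \<le> x") auto
  then have sin_t: "\<bar>sin ((\<theta> - b) / 2)\<bar> = \<bar>sin t\<bar>"
    unfolding t_def by blast
  have "min (2 * t) (2 * pi - 2 * t) \<le> 6 * \<bar>sin t\<bar>"
  proof (cases "t \<le> 2")
    case True
    then show ?thesis using abs_sin_ge_third[of t] t by linarith
  next
    case False
    then have "\<bar>pi - t\<bar> \<le> 2" using t pi_less_4 by linarith
    then show ?thesis using abs_sin_ge_third[of "pi - t"] t by simp
  qed
  then show ?thesis by (simp add: norm_cis_diff sin_t t_def)
qed

lemma norm_rcis_diff_cis: "0 \<le> r \<Longrightarrow> r \<le> 1 \<Longrightarrow> norm (rcis r \<theta> - cis \<theta>) = 1 - r"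
proof -
  assume "0 \<le> r" "r \<le> 1"
  moreover have "rcis r \<theta> - cis \<theta> = of_real (r - 1) * cis \<theta>"
    by (simp add: rcis_def algebra_simps)
  ultimately show ?thesis by (simp add: norm_mult del: of_real_diff)
qed

lemma norm_rcis_diff_le:
  assumes "0 \<le> r" "r \<le> 1"
  shows "norm (rcis r \<theta> - cis b) \<le> (1 - r) + \<bar>\<theta> - b\<bar>"
proof -
  have "norm (cis \<theta> - cis b) \<le> \<bar>\<theta> - b\<bar>"
    using abs_sin_x_le_abs_x[of "(\<theta> - b) / 2"] by (simp add: norm_cis_diff)
  then show ?thesis
    using norm_triangle_ineq[of "rcis r \<theta> - cis \<theta>" "cis \<theta> - cis b"] norm_rcis_diff_cis[OF assms]
    by simp
qed

lemma norm_rcis_diff_ge: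
  assumes "0 \<le> r" "r \<le> 1" "\<bar>\<theta> - b\<bar> \<le> 2 * pi"
  shows "((1 - r) + min \<bar>\<theta> - b\<bar> (2 * pi - \<bar>\<theta> - b\<bar>)) / 7 \<le> norm (rcis r \<theta> - cis b)"
proof -
  have "1 - r \<le> norm (rcis r \<theta> - cis b)"
    using norm_triangle_ineq3[of "cis b" "rcis r \<theta>"] assms by (simp add: norm_minus_commute)
  moreover have "norm (cis \<theta> - cis b) \<le> (1 - r) + norm (rcis r \<theta> - cis b)"
    using norm_triangle_ineq[of "cis \<theta> - rcis r \<theta>" "rcis r \<theta> - cis b"] norm_rcis_diff_cis[OF assms(1,2)]
    by (simp add: norm_minus_commute)
  moreover note norm_cis_diff_ge[OF assms(3)]
  ultimately show ?thesis by (simp add: field_simps)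
qed

lemma cis_Arg_unimodular:
  assumes "norm w = 1"
  shows "cis (Arg w) = w"
proof -
  have "w \<noteq> 0" using assms by auto
  then show ?thesis using assms by (simp add: cis_Arg sgn_eq)
qed

text \<open>The closed form of \<open>J(e, t)\<close>, the integral of \<open>(e + s) powr -k\<close> over \<open>0 \<le> s \<le> t\<close>.\<close>
definition kernel_integral :: "real \<Rightarrow> real \<Rightarrow> real \<Rightarrow> real" where
  "kernel_integral k e t =
     (if k = 1 then ln (e + t) - ln e else ((e + t) powr (1 - k) - e powr (1 - k)) / (1 - k))"

lemma kernel_integral_0 [simp]: "kernel_integral k e 0 = 0"
  by (simp add: kernel_integral_def)

lemma kernel_integral_has_real_derivative:
  assumes "0 < e + t"
  shows "(kernel_integral k e has_real_derivative (e + t) powr -k) (at t)"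
proof (cases "k = 1")
  case True
  have "((\<lambda>t. ln (e + t) - ln e) has_real_derivative 1 / (e + t)) (at t)"
    using assms by (auto intro!: derivative_eq_intros)
  moreover have "kernel_integral k e = (\<lambda>t. ln (e + t) - ln e)"
    using True by (simp add: kernel_integral_def fun_eq_iff)
  ultimately show ?thesis using True assms by (simp add: powr_minus_divide)
next
  case False
  have "((\<lambda>t. ((e + t) powr (1 - k) - e powr (1 - k)) / (1 - k)) has_real_derivative
        (1 - k) * (e + t) powr (1 - k - 1) / (1 - k)) (at t)"
    using assms by (auto intro!: derivative_eq_intros)
  moreover have "kernel_integral k e = (\<lambda>t. ((e + t) powr (1 - k) - e powr (1 - k)) / (1 - k))"
    using False by (simp add: kernel_integral_def fun_eq_iff)
  ultimately show ?thesis using False by simp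
qed

lemma has_integral_kernel_right:
  assumes "0 < e" "0 \<le> T"
  shows "((\<lambda>\<theta>. (e + \<bar>\<theta> - b\<bar>) powr -k) has_integral kernel_integral k e T) {b..b + T}"
proof -
  have "((\<lambda>\<theta>. (e + (\<theta> - b)) powr -k) has_integral
          kernel_integral k e ((b + T) - b) - kernel_integral k e (b - b)) {b..b + T}"
  proof (rule fundamental_theorem_of_calculus)
    fix \<theta> assume "\<theta> \<in> {b..b + T}"
    then have "0 < e + (\<theta> - b)" using assms by simp
    then have "((\<lambda>\<theta>. kernel_integral k e (\<theta> - b)) has_real_derivative (e + (\<theta> - b)) powr -k * 1) (at \<theta>)"
      by (intro DERIV_chain2[where f = "kernel_integral k e"] kernel_integral_has_real_derivative)
         (auto intro!: derivative_eq_intros)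
    then show "((\<lambda>\<theta>. kernel_integral k e (\<theta> - b)) has_vector_derivative (e + (\<theta> - b)) powr -k)
            (at \<theta> within {b..b + T})"
      by (simp add: has_real_derivative_iff_has_vector_derivative has_vector_derivative_at_within)
  qed (use assms in auto)
  then have "((\<lambda>\<theta>. (e + (\<theta> - b)) powr -k) has_integral kernel_integral k e T) {b..b + T}"
    by simp
  then show ?thesis by (rule has_integral_eq[rotated]) auto
qed

lemma has_integral_kernel_left:
  assumes "0 < e" "0 \<le> T"
  shows "((\<lambda>\<theta>. (e + \<bar>\<theta> - b\<bar>) powr -k) has_integral kernel_integral k e T) {b - T..b}"
proof -
  have "((\<lambda>\<theta>. (e + (b - \<theta>)) powr -k) has_integral
          - kernel_integral k e (b - b) - - kernel_integral k e (b - (b - T))) {b - T..b}"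
  proof (rule fundamental_theorem_of_calculus)
    fix \<theta> assume "\<theta> \<in> {b - T..b}"
    then have "0 < e + (b - \<theta>)" using assms by simp
    then have "((\<lambda>\<theta>. kernel_integral k e (b - \<theta>)) has_real_derivative (e + (b - \<theta>)) powr -k * -1) (at \<theta>)"
      by (intro DERIV_chain2[where f = "kernel_integral k e"] kernel_integral_has_real_derivative)
         (auto intro!: derivative_eq_intros)
    then have "((\<lambda>\<theta>. - kernel_integral k e (b - \<theta>)) has_real_derivative (e + (b - \<theta>)) powr -k) (at \<theta>)"
      using DERIV_minus by fastforce
    then show "((\<lambda>\<theta>. - kernel_integral k e (b - \<theta>)) has_vector_derivative (e + (b - \<theta>)) powr -k)
            (at \<theta> within {b - T..b})"
      by (simp add: has_real_derivative_iff_has_vector_derivative has_vector_derivative_at_within)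
  qed (use assms in auto)
  then have "((\<lambda>\<theta>. (e + (b - \<theta>)) powr -k) has_integral kernel_integral k e T) {b - T..b}"
    by simp
  then show ?thesis by (rule has_integral_eq[rotated]) auto
qed

lemma has_integral_kernel_centered:
  assumes "0 < e" "0 \<le> T"
  shows "((\<lambda>\<theta>. (e + \<bar>\<theta> - b\<bar>) powr -k) has_integral 2 * kernel_integral k e T) {b - T..b + T}"
  using has_integral_combine[OF _ _ has_integral_kernel_left has_integral_kernel_right] assms
  by fastforce

lemma kernel_integral_ge:
  assumes "0 < e" "0 \<le> T" "0 \<le> k"
  shows "T * (e + T) powr -k \<le> kernel_integral k e T"
proof -
  have "((\<lambda>\<theta>. (e + T) powr -k) has_integral T * (e + T) powr -k) {0..T}"
    using has_integral_const_real[of "(e + T) powr -k" 0 T] assms by simp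
  moreover have "((\<lambda>\<theta>. (e + \<bar>\<theta>\<bar>) powr -k) has_integral kernel_integral k e T) {0..T}"
    using has_integral_kernel_right[OF assms(1,2), of 0 k] by simp
  ultimately show ?thesis
    by (rule has_integral_le) (use assms in \<open>auto intro!: powr_mono2'\<close>)
qed

lemma asymp_near1I:
  assumes "0 < c1" "c1 \<le> c2" "b < 1"
    and "\<And>r. b < r \<Longrightarrow> r < 1 \<Longrightarrow> c1 * A r \<le> B r \<and> B r \<le> c2 * A r"
  shows "asymp_near1 A B"
  unfolding asymp_near1_def
proof (intro exI conjI)
  show "\<forall>\<^sub>F r in at_left 1. c1 * A r \<le> B r \<and> B r \<le> c2 * A r"
    using eventually_at_left_real[OF assms(3)] by (rule eventually_mono) (use assms(4) in auto)
qed (use assms in auto)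

lemma asymp_near1_sandwich:
  assumes "asymp_near1 A B1" "asymp_near1 A B2" "0 < c1" "0 \<le> c2"
    and "\<forall>\<^sub>F r in at_left 1. 0 \<le> A r" "\<forall>\<^sub>F r in at_left 1. c1 * B1 r \<le> B r"
    and "\<forall>\<^sub>F r in at_left 1. B r \<le> c2 * B2 r"
  shows "asymp_near1 A B"
proof -
  obtain a1 a2 where a: "0 < a1" "\<forall>\<^sub>F r in at_left 1. a1 * A r \<le> B1 r \<and> B1 r \<le> a2 * A r"
    using assms(1) unfolding asymp_near1_def by blast
  obtain b1 b2 where b: "\<forall>\<^sub>F r in at_left 1. b1 * A r \<le> B2 r \<and> B2 r \<le> b2 * A r"
    using assms(2) unfolding asymp_near1_def by blast
  have "\<forall>\<^sub>F r in at_left 1. c1 * a1 * A r \<le> B r \<and> B r \<le> max (c1 * a1) (c2 * b2) * A r"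
    using a(2) b assms(5-7)
  proof eventually_elim
    case (elim r)
    then have "c1 * (a1 * A r) \<le> c1 * B1 r" "c2 * B2 r \<le> c2 * (b2 * A r)"
      using assms(3,4) by (simp_all add: mult_left_mono)
    moreover have "c2 * b2 * A r \<le> max (c1 * a1) (c2 * b2) * A r"
      using elim by (simp add: mult_right_mono)
    ultimately show ?case using elim by (simp add: mult.assoc)
  qed
  then show ?thesis
    unfolding asymp_near1_def using a(1) assms(3)
    by (intro exI[of _ "c1 * a1"] exI[of _ "max (c1 * a1) (c2 * b2)"]) auto
qed

lemma kernel_integral_asymp_gt1:
  assumes "1 < k" "0 < T"
  shows "asymp_near1 (\<lambda>r. 1 / (1 - r) powr (k - 1)) (\<lambda>r. kernel_integral k (1 - r) T)"
proof (rule asymp_near1I)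
  define p where "p = 2 powr (1 - k)"
  show "0 < (1 - p) / (k - 1)"
    using assms by (simp add: p_def powr_less_one)
  show "(1 - p) / (k - 1) \<le> 1 / (k - 1)"
    using assms by (simp add: p_def divide_right_mono)
  fix r assume r: "1 - T < r" "r < 1"
  define e where "e = 1 - r"
  have e: "0 < e" "e \<le> T" using r by (auto simp: e_def)
  define X Y where "X = e powr (1 - k)" and "Y = (e + T) powr (1 - k)"
  have rate: "1 / (1 - r) powr (k - 1) = X"
    using powr_minus_divide[of e "k - 1"] by (simp add: X_def e_def)
  have "kernel_integral k (1 - r) T = (Y - X) / (1 - k)"
    using assms by (simp add: kernel_integral_def X_def Y_def e_def)
  also have "\<dots> = (X - Y) / (k - 1)"
    by (metis minus_diff_eq minus_divide_divide)
  finally have J: "kernel_integral k (1 - r) T = (X - Y) / (k - 1)" .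
  have "Y \<le> (2 * e) powr (1 - k)"
    unfolding Y_def using assms e by (intro powr_mono2') auto
  then have "Y \<le> p * X"
    using e by (simp add: X_def p_def powr_mult)
  then have "(1 - p) * X \<le> X - Y" "X - Y \<le> X"
    by (auto simp: Y_def algebra_simps)
  then show "(1 - p) / (k - 1) * (1 / (1 - r) powr (k - 1)) \<le> kernel_integral k (1 - r) T
      \<and> kernel_integral k (1 - r) T \<le> 1 / (k - 1) * (1 / (1 - r) powr (k - 1))"
    unfolding rate J using assms by (auto intro: divide_right_mono)
qed (use assms in simp)

lemma kernel_integral_asymp_eq1:
  assumes "0 < T"
  shows "asymp_near1 (\<lambda>r. ln (1 / (1 - r))) (\<lambda>r. kernel_integral 1 (1 - r) T)"
proof (rule asymp_near1I)
  show "(0::real) < 1 / 2" "1 / 2 \<le> ln (1 + T) + 1"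
    using assms by auto
  fix r assume r: "1 - min (exp (-1)) (T\<^sup>2) < r" "r < 1"
  define e where "e = 1 - r"
  have e: "0 < e" "e \<le> exp (-1)" "e \<le> T\<^sup>2" using r by (auto simp: e_def)
  then have "e \<le> 1" using exp_le_one_iff[of "-1"] by linarith
  define L where "L = ln (1 / (1 - r))"
  have L: "L = - ln e" using e by (simp add: L_def e_def ln_div)
  have "ln e \<le> -1" using e by (metis ln_exp ln_le_cancel_iff exp_gt_zero)
  then have L1: "1 \<le> L" using L by simp
  have "ln e \<le> ln (T\<^sup>2)" using e assms by simp
  then have "ln e \<le> 2 * ln T" using ln_realpow[of T 2] assms by simp
  then have LT: "- 2 * ln T \<le> L" using L by simp
  have J: "kernel_integral 1 (1 - r) T = ln (e + T) + L"
    using L by (simp add: kernel_integral_def e_def)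
  have "ln T \<le> ln (e + T)" "ln (e + T) \<le> ln (1 + T)"
    using e \<open>e \<le> 1\<close> assms by auto
  moreover have "0 \<le> ln (1 + T)" using assms by simp
  ultimately show "1 / 2 * ln (1 / (1 - r)) \<le> kernel_integral 1 (1 - r) T
      \<and> kernel_integral 1 (1 - r) T \<le> (ln (1 + T) + 1) * ln (1 / (1 - r))"
    unfolding J L_def[symmetric] using L1 LT mult_left_mono[OF L1, of "ln (1 + T)"]
    by (auto simp: algebra_simps)
qed (use assms in auto)

lemma kernel_integral_asymp_lt1:
  assumes "0 < k" "k < 1" "0 < T"
  shows "asymp_near1 (\<lambda>r. 1) (\<lambda>r. kernel_integral k (1 - r) T)"
proof (rule asymp_near1I)
  show "0 < T * (1 + T) powr -k" using assms by simp
  show "T * (1 + T) powr -k \<le> max (T * (1 + T) powr -k) ((1 + T) powr (1 - k) / (1 - k))"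
    by simp
  fix r :: real assume r: "0 < r" "r < 1"
  define e where "e = 1 - r"
  have e: "0 < e" "e \<le> 1" using r by (auto simp: e_def)
  have "T * (1 + T) powr -k \<le> T * (e + T) powr -k"
    using e assms by (intro mult_left_mono powr_mono2') auto
  also have "\<dots> \<le> kernel_integral k e T"
    using e assms by (intro kernel_integral_ge) auto
  finally have lower: "T * (1 + T) powr -k \<le> kernel_integral k e T" .
  have "kernel_integral k e T \<le> (e + T) powr (1 - k) / (1 - k)"
    using assms by (simp add: kernel_integral_def divide_right_mono)
  also have "\<dots> \<le> (1 + T) powr (1 - k) / (1 - k)"
    using e assms by (intro divide_right_mono powr_mono2) auto
  finally show "T * (1 + T) powr -k * 1 \<le> kernel_integral k (1 - r) T
      \<and> kernel_integral k (1 - r) T \<le> max (T * (1 + T) powr -k) ((1 + T) powr (1 - k) / (1 - k)) * 1"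
    using lower by (simp add: e_def)
qed simp

definition blowup_rate :: "real \<Rightarrow> real \<Rightarrow> real" where
  "blowup_rate k r =
     (if 1 < k then 1 / (1 - r) powr (k - 1) else if k = 1 then ln (1 / (1 - r)) else 1)"

lemma eventually_blowup_rate_nonneg: "\<forall>\<^sub>F r in at_left 1. 0 \<le> blowup_rate k r"
  using eventually_at_left_real[of 0 1] by (rule eventually_mono) (auto simp: blowup_rate_def)

lemma kernel_integral_asymp:
  assumes "0 < k" "0 < T"
  shows "asymp_near1 (blowup_rate k) (\<lambda>r. kernel_integral k (1 - r) T)"
  using kernel_integral_asymp_gt1[of k T] kernel_integral_asymp_eq1[of T]
    kernel_integral_asymp_lt1[of k T] assms
  by (cases "1 < k"; cases "k = 1") (auto simp: blowup_rate_def[abs_def])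

lemma finite_inj_on_separated:
  fixes w :: "'a \<Rightarrow> 'b::metric_space"
  assumes "finite S" "inj_on w S"
  shows "\<exists>\<delta>>0. \<forall>i\<in>S. \<forall>j\<in>S. i \<noteq> j \<longrightarrow> \<delta> \<le> dist (w i) (w j)"
proof -
  define D where "D = (\<lambda>(i, j). dist (w i) (w j)) ` {(i, j) \<in> S \<times> S. i \<noteq> j}"
  have "finite {(i, j) \<in> S \<times> S. i \<noteq> j}"
    using assms(1) by (auto intro: finite_subset[of _ "S \<times> S"])
  then have D: "finite (insert 1 D)" by (simp add: D_def)
  have "\<forall>d\<in>insert 1 D. 0 < d"
    using assms(2) by (auto simp: D_def inj_on_def)
  then have "0 < Min (insert 1 D)"
    using D by (simp add: Min_gr_iff)
  moreover have "Min (insert 1 D) \<le> dist (w i) (w j)" if "i \<in> S" "j \<in> S" "i \<noteq> j" for i j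
    using D that by (intro Min_le) (auto simp: D_def)
  ultimately show ?thesis by blast
qed

text \<open>If \<open>z\<close> is close to some \<open>w j\<close>, the other factors are bounded below by the separation;
  otherwise all factors are.\<close>
lemma prod_norm_diff_ge_nearest:
  fixes w :: "'a \<Rightarrow> 'b::real_normed_vector"
  assumes "finite S" "S \<noteq> {}" "inj_on w S" "\<forall>j\<in>S. norm (w j) = 1"
  shows "\<exists>c>0. \<forall>z. norm z \<le> 1 \<longrightarrow> (\<exists>j\<in>S. c * norm (z - w j) \<le> (\<Prod>i\<in>S. norm (z - w i)))"
proof -
  obtain \<delta> where \<delta>: "0 < \<delta>" "\<forall>i\<in>S. \<forall>j\<in>S. i \<noteq> j \<longrightarrow> \<delta> \<le> norm (w i - w j)"
    using finite_inj_on_separated[OF assms(1,3)] by (auto simp: dist_norm)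
  define \<epsilon> where "\<epsilon> = min 1 (\<delta> / 2)"
  have \<epsilon>: "0 < \<epsilon>" "\<epsilon> \<le> 1" "2 * \<epsilon> \<le> \<delta>" using \<delta> by (auto simp: \<epsilon>_def)
  have "\<exists>j\<in>S. \<epsilon> ^ card S / 2 * norm (z - w j) \<le> (\<Prod>i\<in>S. norm (z - w i))" if z: "norm z \<le> 1" for z
  proof (cases "\<exists>j\<in>S. norm (z - w j) < \<epsilon>")
    case True
    then obtain j where j: "j \<in> S" "norm (z - w j) < \<epsilon>" by blast
    have "\<epsilon> \<le> norm (z - w i)" if "i \<in> S - {j}" for i
    proof -
      have "\<delta> \<le> norm (w j - w i)" using \<delta>(2) j that by auto
      also have "\<dots> \<le> norm (z - w j) + norm (z - w i)"
        using norm_triangle_ineq[of "w j - z" "z - w i"] by (simp add: norm_minus_commute)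
      finally show ?thesis using j \<epsilon>(3) by linarith
    qed
    then have "(\<Prod>i\<in>S - {j}. \<epsilon>) \<le> (\<Prod>i\<in>S - {j}. norm (z - w i))"
      using \<epsilon> by (intro prod_mono) auto
    then have "\<epsilon> ^ card (S - {j}) \<le> (\<Prod>i\<in>S - {j}. norm (z - w i))"
      by simp
    moreover have "\<epsilon> ^ card S \<le> \<epsilon> ^ card (S - {j})"
      using \<epsilon> assms(1) j by (intro power_decreasing) (auto simp: card_Diff_singleton)
    ultimately have "\<epsilon> ^ card S / 2 \<le> (\<Prod>i\<in>S - {j}. norm (z - w i))"
      using zero_le_power[of \<epsilon> "card S"] \<epsilon> by linarith
    then have "\<epsilon> ^ card S / 2 * norm (z - w j) \<le> norm (z - w j) * (\<Prod>i\<in>S - {j}. norm (z - w i))"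
      by (metis mult.commute mult_left_mono norm_ge_zero)
    also have "\<dots> = (\<Prod>i\<in>S. norm (z - w i))"
      using assms(1) j by (simp add: prod.remove)
    finally show ?thesis using j by blast
  next
    case False
    obtain j where j: "j \<in> S" using assms(2) by blast
    have "norm (z - w j) \<le> 2"
      using norm_triangle_ineq4[of z "w j"] z assms(4) j by simp
    then have "\<epsilon> ^ card S / 2 * norm (z - w j) \<le> \<epsilon> ^ card S"
      using \<epsilon> by (simp add: mult_left_le)
    also have "\<dots> = (\<Prod>i\<in>S. \<epsilon>)" by simp
    also have "\<dots> \<le> (\<Prod>i\<in>S. norm (z - w i))"
      using False \<epsilon> by (intro prod_mono) auto
    finally show ?thesis using j by blast
  qed
  moreover have "0 < \<epsilon> ^ card S / 2" using \<epsilon> by simp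
  ultimately show ?thesis by blast
qed

lemma prod_norm_diff_le:
  fixes w :: "'a \<Rightarrow> 'b::real_normed_vector"
  assumes "finite S" "j \<in> S" "\<forall>i\<in>S. norm (w i) = 1" "norm z \<le> 1"
  shows "(\<Prod>i\<in>S. norm (z - w i)) \<le> 2 ^ (card S - 1) * norm (z - w j)"
proof -
  have "norm (z - w i) \<le> 2" if "i \<in> S" for i
    using norm_triangle_ineq4[of z "w i"] assms(3,4) that by simp
  then have "(\<Prod>i\<in>S - {j}. norm (z - w i)) \<le> (\<Prod>i\<in>S - {j}. 2)"
    by (intro prod_mono) auto
  then have "(\<Prod>i\<in>S - {j}. norm (z - w i)) \<le> 2 ^ (card S - 1)"
    using assms(1,2) by (simp add: card_Diff_singleton)
  then have "norm (z - w j) * (\<Prod>i\<in>S - {j}. norm (z - w i)) \<le> norm (z - w j) * 2 ^ (card S - 1)"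
    by (simp add: mult_left_mono)
  then show ?thesis
    using assms(1,2) by (simp add: prod.remove mult.commute)
qed

text \<open>The kernel centred at \<open>b\<close> and at its two translates by \<open>2\<pi>\<close>: on \<open>[-\<pi>, \<pi>]\<close> the
  angular distance to \<open>b\<close> modulo \<open>2\<pi>\<close> is attained at one of them.\<close>
definition wrapped_kernel :: "real \<Rightarrow> real \<Rightarrow> real \<Rightarrow> real \<Rightarrow> real" where
  "wrapped_kernel k e b \<theta> = (e + \<bar>\<theta> - b\<bar>) powr -k + (e + \<bar>\<theta> - (b - 2 * pi)\<bar>) powr -k
     + (e + \<bar>\<theta> - (b + 2 * pi)\<bar>) powr -k"

lemma norm_rcis_diff_powr_le:
  assumes "norm w = 1" "0 \<le> r" "r < 1" "\<theta> \<in> {-pi..pi}" "0 \<le> k"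
  shows "norm (rcis r \<theta> - w) powr -k \<le> 7 powr k * wrapped_kernel k (1 - r) (Arg w) \<theta>"
proof -
  define b where "b = Arg w"
  define m where "m = min \<bar>\<theta> - b\<bar> (2 * pi - \<bar>\<theta> - b\<bar>)"
  have b: "\<bar>\<theta> - b\<bar> \<le> 2 * pi" using assms(4) Arg_bounded[of w] by (auto simp: b_def)
  then have m: "0 \<le> m" by (simp add: m_def)
  have "((1 - r) + m) / 7 \<le> norm (rcis r \<theta> - w)"
    using norm_rcis_diff_ge[OF assms(2) _ b] assms by (simp add: b_def m_def cis_Arg_unimodular)
  moreover have "0 < ((1 - r) + m) / 7" using assms(3) m by simp
  ultimately have "norm (rcis r \<theta> - w) powr -k \<le> (((1 - r) + m) / 7) powr -k"
    using assms(5) by (intro powr_mono2') auto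
  also have "\<dots> = 7 powr k * ((1 - r) + m) powr -k"
    using assms(3) m by (simp add: powr_divide powr_minus divide_simps)
  also have "m \<in> {\<bar>\<theta> - b\<bar>, \<bar>\<theta> - (b - 2 * pi)\<bar>, \<bar>\<theta> - (b + 2 * pi)\<bar>}"
    using b unfolding m_def min_def by (auto simp: abs_if split: if_split_asm)
  then have "((1 - r) + m) powr -k \<le> wrapped_kernel k (1 - r) b \<theta>"
    unfolding wrapped_kernel_def by (auto simp: add_increasing add_increasing2)
  finally show ?thesis by (simp add: b_def mult_left_mono)
qed

lemma integral_kernel_le:
  assumes "0 < e" "\<bar>b\<bar> \<le> 3 * pi"
  shows "(\<lambda>\<theta>. (e + \<bar>\<theta> - b\<bar>) powr -k) integrable_on {-pi..pi}"
    and "integral {-pi..pi} (\<lambda>\<theta>. (e + \<bar>\<theta> - b\<bar>) powr -k) \<le> 2 * kernel_integral k e (4 * pi)"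
proof -
  have full: "((\<lambda>\<theta>. (e + \<bar>\<theta> - b\<bar>) powr -k) has_integral 2 * kernel_integral k e (4 * pi))
      {b - 4 * pi..b + 4 * pi}"
    using assms by (intro has_integral_kernel_centered) auto
  have sub: "{-pi..pi} \<subseteq> {b - 4 * pi..b + 4 * pi}" using assms by auto
  show int: "(\<lambda>\<theta>. (e + \<bar>\<theta> - b\<bar>) powr -k) integrable_on {-pi..pi}"
    using integrable_subinterval_real[OF has_integral_integrable[OF full] sub] .
  show "integral {-pi..pi} (\<lambda>\<theta>. (e + \<bar>\<theta> - b\<bar>) powr -k) \<le> 2 * kernel_integral k e (4 * pi)"
    using integral_subset_le[OF sub int has_integral_integrable[OF full]] integral_unique[OF full]
    by simp
qed

lemma integral_wrapped_kernel_le: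
  assumes "0 < e" "\<bar>b\<bar> \<le> pi"
  shows "wrapped_kernel k e b integrable_on {-pi..pi}"
    and "integral {-pi..pi} (wrapped_kernel k e b) \<le> 6 * kernel_integral k e (4 * pi)"
proof -
  have "\<bar>b\<bar> \<le> 3 * pi" "\<bar>b - 2 * pi\<bar> \<le> 3 * pi" "\<bar>b + 2 * pi\<bar> \<le> 3 * pi"
    using assms by auto
  note bounds = integral_kernel_le[OF assms(1) this(1), where k = k]
    integral_kernel_le[OF assms(1) this(2), where k = k] integral_kernel_le[OF assms(1) this(3), where k = k]
  show "wrapped_kernel k e b integrable_on {-pi..pi}"
    unfolding wrapped_kernel_def[abs_def] using bounds by (intro integrable_add) auto
  then show "integral {-pi..pi} (wrapped_kernel k e b) \<le> 6 * kernel_integral k e (4 * pi)"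
    unfolding wrapped_kernel_def[abs_def] using bounds
    by (simp add: Henstock_Kurzweil_Integration.integral_add integrable_add)
qed

lemma integral_sum_wrapped_kernel_le:
  assumes "finite S" "0 < e" "\<forall>j\<in>S. \<bar>b j\<bar> \<le> pi"
  shows "(\<lambda>\<theta>. \<Sum>j\<in>S. wrapped_kernel k e (b j) \<theta>) integrable_on {-pi..pi}"
    and "integral {-pi..pi} (\<lambda>\<theta>. \<Sum>j\<in>S. wrapped_kernel k e (b j) \<theta>)
           \<le> card S * (6 * kernel_integral k e (4 * pi))"
proof -
  note wrapped = integral_wrapped_kernel_le[OF assms(2), where k = k]
  show "(\<lambda>\<theta>. \<Sum>j\<in>S. wrapped_kernel k e (b j) \<theta>) integrable_on {-pi..pi}"
    using wrapped(1) assms(3) by (intro integrable_sum assms(1)) auto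
  have "integral {-pi..pi} (\<lambda>\<theta>. \<Sum>j\<in>S. wrapped_kernel k e (b j) \<theta>)
      = (\<Sum>j\<in>S. integral {-pi..pi} (wrapped_kernel k e (b j)))"
    using wrapped(1) assms(3) by (intro Henstock_Kurzweil_Integration.integral_sum assms(1)) auto
  also have "\<dots> \<le> (\<Sum>j\<in>S. 6 * kernel_integral k e (4 * pi))"
    using wrapped(2) assms(3) by (intro sum_mono) auto
  finally show "integral {-pi..pi} (\<lambda>\<theta>. \<Sum>j\<in>S. wrapped_kernel k e (b j) \<theta>)
      \<le> card S * (6 * kernel_integral k e (4 * pi))" by simp
qed

lemma powr_le_sum_wrapped_kernel:
  fixes w :: "'a \<Rightarrow> complex"
  assumes "finite S" "j \<in> S" "\<forall>i\<in>S. norm (w i) = 1" "0 \<le> r" "r < 1" "\<theta> \<in> {-pi..pi}"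
    and "0 < k" "0 < c" "c * norm (rcis r \<theta> - w j) \<le> y"
  shows "y powr -k \<le> c powr -k * 7 powr k * (\<Sum>i\<in>S. wrapped_kernel k (1 - r) (Arg (w i)) \<theta>)"
proof -
  have "norm (rcis r \<theta>) < 1" using assms(4,5) by simp
  then have "rcis r \<theta> \<noteq> w j" using assms(2,3) by (metis less_irrefl)
  then have "0 < c * norm (rcis r \<theta> - w j)" using assms(8) by simp
  then have "y powr -k \<le> (c * norm (rcis r \<theta> - w j)) powr -k"
    using assms(7,9) by (intro powr_mono2') auto
  also have "\<dots> = c powr -k * norm (rcis r \<theta> - w j) powr -k"
    using assms(8) by (simp add: powr_mult)
  also have "\<dots> \<le> c powr -k * (7 powr k * wrapped_kernel k (1 - r) (Arg (w j)) \<theta>)"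
    using assms by (intro mult_left_mono norm_rcis_diff_powr_le) auto
  also have "wrapped_kernel k (1 - r) (Arg (w j)) \<theta> \<le> (\<Sum>i\<in>S. wrapped_kernel k (1 - r) (Arg (w i)) \<theta>)"
    using assms(1,2) by (intro member_le_sum) (auto simp: wrapped_kernel_def)
  finally show ?thesis by (simp add: mult_left_mono mult.assoc)
qed

lemma rcis_in_sector: "r1 < r \<Longrightarrow> r < 1 \<Longrightarrow> \<bar>\<theta> - a\<bar> < t \<Longrightarrow> rcis r \<theta> \<in> sector r1 a t"
  unfolding sector_def by (intro CollectI exI[of _ r] exI[of _ \<theta>]) (auto simp: rcis_def cis_conv_exp)

lemma norm_less_1_if_in_sector: "0 \<le> r1 \<Longrightarrow> z \<in> sector r1 a t \<Longrightarrow> norm z < 1"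
  by (auto simp: sector_def norm_mult)

lemma prod_diff_mult_nonzero:
  fixes w :: "'a \<Rightarrow> complex"
  assumes "finite S" "\<forall>j\<in>S. norm (w j) = 1" "norm z < 1" "g z \<noteq> 0"
  shows "(\<Prod>j\<in>S. z - w j) * g z \<noteq> 0"
proof -
  have "z \<noteq> w j" if "j \<in> S" for j using assms(2,3) that by auto
  then show ?thesis using assms(1,4) by simp
qed

lemma integrable_norm_powr_circle:
  fixes f g :: "complex \<Rightarrow> complex" and w :: "'a \<Rightarrow> complex"
  assumes f: "\<forall>z. f z = (\<Prod>j\<in>S. z - w j) * g z"
    and "finite S" "\<forall>j\<in>S. norm (w j) = 1" "continuous_on (ball 0 1) g"
    and "0 \<le> r" "r < 1" "\<forall>\<theta>. g (rcis r \<theta>) \<noteq> 0"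
  shows "(\<lambda>\<theta>. norm (f (rcis r \<theta>)) powr a) integrable_on {x..y}"
proof -
  have "continuous_on {x..y} (\<lambda>\<theta>. g (rcis r \<theta>))"
    by (rule continuous_on_compose2[OF assms(4)]) (use assms(5,6) in \<open>auto intro!: continuous_intros\<close>)
  moreover have "(\<Prod>j\<in>S. rcis r \<theta> - w j) * g (rcis r \<theta>) \<noteq> 0" for \<theta>
    using assms(5-7) by (intro prod_diff_mult_nonzero[OF assms(2,3)]) auto
  ultimately have "continuous_on {x..y} (\<lambda>\<theta>. norm ((\<Prod>j\<in>S. rcis r \<theta> - w j) * g (rcis r \<theta>)) powr a)"
    by (auto intro!: continuous_intros)
  then show ?thesis using f by (simp add: integrable_continuous_interval)
qed

lemma integral_norm_powr_upper:
  fixes f g :: "complex \<Rightarrow> complex" and w :: "'a \<Rightarrow> complex"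
  assumes f: "\<forall>z. f z = (\<Prod>j\<in>S. z - w j) * g z"
    and S: "finite S" "S \<noteq> {}" "inj_on w S" "\<forall>j\<in>S. norm (w j) = 1"
    and "0 < k" "continuous_on (ball 0 1) g" "0 \<le> r0" "0 < c" "r0 < 1"
    and g_low: "\<forall>z. r0 < norm z \<and> norm z < 1 \<longrightarrow> c \<le> norm (g z)"
  shows "\<exists>K\<ge>0. \<forall>\<^sub>F r in at_left 1.
           integral {-pi..pi} (\<lambda>\<theta>. norm (f (rcis r \<theta>)) powr -k) \<le> K * kernel_integral k (1 - r) (4 * pi)"
proof -
  obtain c' where c': "0 < c'"
    "\<And>z. norm z \<le> 1 \<Longrightarrow> \<exists>j\<in>S. c' * norm (z - w j) \<le> (\<Prod>i\<in>S. norm (z - w i))"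
    using prod_norm_diff_ge_nearest[OF S] by blast
  define K0 where "K0 = (c * c') powr -k * 7 powr k"
  define W where "W r \<theta> = (\<Sum>j\<in>S. wrapped_kernel k (1 - r) (Arg (w j)) \<theta>)" for r \<theta>
  have "integral {-pi..pi} (\<lambda>\<theta>. norm (f (rcis r \<theta>)) powr -k)
          \<le> K0 * (card S * (6 * kernel_integral k (1 - r) (4 * pi)))"
    if "r \<in> {r0<..<1}" for r
  proof -
    from that have r: "r0 < r" "r < 1" by auto
    have g_r: "c \<le> norm (g (rcis r \<theta>))" for \<theta> using g_low r assms(8) by simp
    then have g_nz: "\<forall>\<theta>. g (rcis r \<theta>) \<noteq> 0" using assms(9) by (metis norm_zero not_le)
    have "\<bar>Arg z\<bar> \<le> pi" for z using Arg_bounded[of z] by linarith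
    then have Arg: "\<forall>j\<in>S. \<bar>Arg (w j)\<bar> \<le> pi" by simp
    note W = integral_sum_wrapped_kernel_le[OF S(1) _ Arg, of "1 - r" k, folded W_def]
    have "integral {-pi..pi} (\<lambda>\<theta>. norm (f (rcis r \<theta>)) powr -k) \<le> integral {-pi..pi} (\<lambda>\<theta>. K0 * W r \<theta>)"
    proof (rule integral_le)
      fix \<theta> assume \<theta>: "\<theta> \<in> {-pi..pi}"
      obtain j where j: "j \<in> S" "c' * norm (rcis r \<theta> - w j) \<le> (\<Prod>i\<in>S. norm (rcis r \<theta> - w i))"
        using c'(2)[of "rcis r \<theta>"] r assms(8) by auto
      have "c * c' * norm (rcis r \<theta> - w j) \<le> norm (f (rcis r \<theta>))"
        using mult_mono[OF g_r j(2)] assms(9) c'(1)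
        by (simp add: f norm_mult prod_norm mult_ac)
      then show "norm (f (rcis r \<theta>)) powr -k \<le> K0 * W r \<theta>"
        unfolding K0_def W_def using S(1,4) j(1) r assms(6,8,9) c'(1) \<theta>
        by (intro powr_le_sum_wrapped_kernel) auto
    next
      show "(\<lambda>\<theta>. norm (f (rcis r \<theta>)) powr -k) integrable_on {-pi..pi}"
        using r assms(8) by (intro integrable_norm_powr_circle[OF f S(1,4) assms(7) _ _ g_nz]) auto
      show "(\<lambda>\<theta>. K0 * W r \<theta>) integrable_on {-pi..pi}"
        using W(1) r by (intro integrable_on_mult_right) auto
    qed
    also have "\<dots> \<le> K0 * (card S * (6 * kernel_integral k (1 - r) (4 * pi)))"
      using W(2) r by (auto simp: K0_def intro!: mult_left_mono)
    finally show ?thesis .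
  qed
  then show ?thesis
    using eventually_at_left_real[OF assms(10)]
    by (intro exI[of _ "K0 * card S * 6"]) (auto simp: K0_def mult_ac elim!: eventually_mono)
qed

lemma kernel_le_norm_powr_near:
  fixes f g :: "complex \<Rightarrow> complex" and w :: "'a \<Rightarrow> complex"
  assumes f: "\<forall>z. f z = (\<Prod>i\<in>S. z - w i) * g z"
    and S: "finite S" "j \<in> S" "\<forall>i\<in>S. norm (w i) = 1"
    and "0 < k" "0 < C" "0 \<le> r1" "r1 < r" "r < 1" "\<bar>\<theta> - Arg (w j)\<bar> < \<phi>" "g (rcis r \<theta>) \<noteq> 0"
    and g_sector: "\<forall>z\<in>sector r1 (Arg (w j)) \<phi>. norm (g z) \<le> C"
  shows "(2 ^ (card S - 1) * C) powr -k * (1 - r + \<bar>\<theta> - Arg (w j)\<bar>) powr -k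
           \<le> norm (f (rcis r \<theta>)) powr -k"
proof -
  define z where "z = rcis r \<theta>"
  define M where "M = 2 ^ (card S - 1) * C"
  have z: "z \<in> sector r1 (Arg (w j)) \<phi>" "norm z < 1"
    using assms(7-10) by (auto simp: z_def intro: rcis_in_sector)
  have "f z \<noteq> 0"
    unfolding f[rule_format] using z assms(11) by (intro prod_diff_mult_nonzero[OF S(1,3)]) (auto simp: z_def)
  have "norm (f z) = (\<Prod>i\<in>S. norm (z - w i)) * norm (g z)"
    by (simp add: f norm_mult prod_norm)
  also have "\<dots> \<le> (2 ^ (card S - 1) * norm (z - w j)) * C"
    using g_sector z by (intro mult_mono prod_norm_diff_le[OF S]) (auto simp: prod_nonneg)
  also have "norm (z - w j) \<le> 1 - r + \<bar>\<theta> - Arg (w j)\<bar>"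
    using norm_rcis_diff_le[of r \<theta> "Arg (w j)"] assms(7,8,9) S(2,3)
    by (simp add: z_def cis_Arg_unimodular)
  finally have "norm (f z) \<le> M * (1 - r + \<bar>\<theta> - Arg (w j)\<bar>)"
    using assms(6) by (simp add: M_def mult_ac mult_left_mono)
  then have "(M * (1 - r + \<bar>\<theta> - Arg (w j)\<bar>)) powr -k \<le> norm (f z) powr -k"
    using \<open>f z \<noteq> 0\<close> assms(5) by (intro powr_mono2') auto
  then show ?thesis using assms(6,9) by (simp add: powr_mult M_def z_def)
qed

lemma integral_norm_powr_lower:
  fixes f g :: "complex \<Rightarrow> complex" and w :: "'a \<Rightarrow> complex"
  assumes f: "\<forall>z. f z = (\<Prod>i\<in>S. z - w i) * g z"
    and S: "finite S" "j \<in> S" "\<forall>i\<in>S. norm (w i) = 1"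
    and "0 < k" "0 < \<phi>" "0 < C" "0 \<le> r0" "r0 < 1" "0 \<le> r1" "r1 < 1"
    and "continuous_on (ball 0 1) g" "\<forall>z. r0 < norm z \<and> norm z < 1 \<longrightarrow> g z \<noteq> 0"
    and g_sector: "\<forall>z\<in>sector r1 (Arg (w j)) \<phi>. norm (g z) \<le> C"
  shows "\<exists>\<eta>>0. \<forall>\<^sub>F r in at_left 1. (2 ^ (card S - 1) * C) powr -k * kernel_integral k (1 - r) \<eta>
           \<le> integral {-pi..pi} (\<lambda>\<theta>. norm (f (rcis r \<theta>)) powr -k)"
proof -
  define a where "a = Arg (w j)"
  define \<eta> where "\<eta> = min (\<phi> / 2) pi"
  define p where "p = (if a \<le> 0 then a else a - \<eta>)"
  have \<eta>: "0 < \<eta>" "\<eta> < \<phi>" "\<eta> \<le> pi" using assms(6) by (auto simp: \<eta>_def)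
  have sub: "{p..p + \<eta>} \<subseteq> {-pi..pi}"
    using Arg_bounded[of "w j"] \<eta> by (auto simp: p_def a_def)
  have "(2 ^ (card S - 1) * C) powr -k * kernel_integral k (1 - r) \<eta>
      \<le> integral {-pi..pi} (\<lambda>\<theta>. norm (f (rcis r \<theta>)) powr -k)" if "r \<in> {max r0 r1<..<1}" for r
  proof -
    from that have r: "r0 < r" "r1 < r" "r < 1" by auto
    let ?F = "\<lambda>\<theta>. norm (f (rcis r \<theta>)) powr -k"
    have g_nz: "\<forall>\<theta>. g (rcis r \<theta>) \<noteq> 0" using assms(8,13) r by simp
    have F_int: "?F integrable_on {x..y}" for x y
      using r assms(8) by (intro integrable_norm_powr_circle[OF f S(1,3) assms(12) _ _ g_nz]) auto
    have "((\<lambda>\<theta>. (1 - r + \<bar>\<theta> - a\<bar>) powr -k) has_integral kernel_integral k (1 - r) \<eta>) {p..p + \<eta>}"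
      using has_integral_kernel_right[of "1 - r" \<eta> a k] has_integral_kernel_left[of "1 - r" \<eta> a k] r \<eta>
      by (simp add: p_def)
    then have "(2 ^ (card S - 1) * C) powr -k * kernel_integral k (1 - r) \<eta> \<le> integral {p..p + \<eta>} ?F"
    proof (rule has_integral_le[OF has_integral_mult_right integrable_integral[OF F_int]])
      fix \<theta> assume "\<theta> \<in> {p..p + \<eta>}"
      then have "\<bar>\<theta> - a\<bar> < \<phi>" using \<eta> by (auto simp: p_def split: if_splits)
      then show "(2 ^ (card S - 1) * C) powr -k * (1 - r + \<bar>\<theta> - a\<bar>) powr -k \<le> ?F \<theta>"
        unfolding a_def using assms(5,7,10) r g_nz
        by (intro kernel_le_norm_powr_near[OF f S _ _ _ _ _ _ _ g_sector]) auto
    qed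
    also have "\<dots> \<le> integral {-pi..pi} ?F"
      by (intro integral_subset_le[OF sub F_int F_int]) simp
    finally show ?thesis .
  qed
  then show ?thesis
    using eventually_at_left_real[of "max r0 r1" 1] assms(9,11) \<eta>(1)
    by (intro exI[of _ \<eta>]) (auto elim!: eventually_mono)
qed

theorem mainTheorem12:
  fixes \<kappa> :: real and n :: nat and zs :: "nat \<Rightarrow> complex"
    and g f :: "complex \<Rightarrow> complex"
    and rr vth C :: "nat \<Rightarrow> real"
  assumes kappa_pos: "\<kappa> > 0"
    and n_pos: "n \<ge> 1"
    and zs_T: "\<forall>j\<in>{1..n}. norm (zs j) = 1"
    and zs_distinct: "inj_on zs {1..n}"
    and g_hol: "g holomorphic_on ball 0 1"
    and lower: "\<exists>c0 r0. c0 > 0 \<and> 0 < r0 \<and> r0 < 1 \<and>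
                  (\<forall>z. r0 < norm z \<and> norm z < 1 \<longrightarrow> norm (g z) \<ge> c0)"
    and sect_params: "\<forall>j\<in>{1..n}. 0 < rr j \<and> rr j < 1 \<and> vth j > 0 \<and> C j > 0"
    and upper: "\<forall>j\<in>{1..n}. \<forall>z\<in>sector (rr j) (Arg (zs j)) (vth j). norm (g z) \<le> C j"
    and disjoint: "\<forall>j1\<in>{1..n}. \<forall>j2\<in>{1..n}. j1 \<noteq> j2 \<longrightarrow>
                  sector (rr j1) (Arg (zs j1)) (vth j1) \<inter> sector (rr j2) (Arg (zs j2)) (vth j2) = {}"
    and f_def: "\<forall>z. f z = (\<Prod>j=1..n. z - zs j) * g z"
  defines "I \<equiv> (\<lambda>r. integral {-pi..pi}
              (\<lambda>\<theta>. 1 / norm (f (complex_of_real r * exp (\<i> * complex_of_real \<theta>))) powr \<kappa>))"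
  shows "(\<kappa> > 1 \<longrightarrow> asymp_near1 (\<lambda>r. 1 / (1 - r) powr (\<kappa> - 1)) I)
       \<and> (\<kappa> = 1 \<longrightarrow> asymp_near1 (\<lambda>r. ln (1 / (1 - r))) I)
       \<and> (\<kappa> < 1 \<longrightarrow> asymp_near1 (\<lambda>r. 1) I)"
proof -
  obtain c0 r0 where c0: "0 < c0" "0 < r0" "r0 < 1"
    and g_low: "\<forall>z. r0 < norm z \<and> norm z < 1 \<longrightarrow> c0 \<le> norm (g z)"
    using lower by blast
  have g_cont: "continuous_on (ball 0 1) g"
    using g_hol by (rule holomorphic_on_imp_continuous_on)
  have g_nz: "\<forall>z. r0 < norm z \<and> norm z < 1 \<longrightarrow> g z \<noteq> 0"
    using g_low c0(1) by fastforce
  have sect1: "0 < rr 1" "rr 1 < 1" "0 < vth 1" "0 < C 1"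
    and g_sector: "\<forall>z\<in>sector (rr 1) (Arg (zs 1)) (vth 1). norm (g z) \<le> C 1"
    using sect_params upper n_pos by auto
  obtain K where "0 \<le> K" and I_upper: "\<forall>\<^sub>F r in at_left 1.
      integral {-pi..pi} (\<lambda>\<theta>. norm (f (rcis r \<theta>)) powr -\<kappa>) \<le> K * kernel_integral \<kappa> (1 - r) (4 * pi)"
    using integral_norm_powr_upper[OF f_def _ _ zs_distinct zs_T kappa_pos g_cont _ c0(1,3) g_low]
      n_pos c0(2) by auto
  obtain \<eta> where "0 < \<eta>" and I_lower: "\<forall>\<^sub>F r in at_left 1. (2 ^ (card {1..n} - 1) * C 1) powr -\<kappa>
      * kernel_integral \<kappa> (1 - r) \<eta> \<le> integral {-pi..pi} (\<lambda>\<theta>. norm (f (rcis r \<theta>)) powr -\<kappa>)"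
    using integral_norm_powr_lower[OF f_def _ _ zs_T kappa_pos _ _ _ c0(3) _ _ g_cont g_nz g_sector]
      n_pos c0 sect1 by auto
  have I_eq: "I = (\<lambda>r. integral {-pi..pi} (\<lambda>\<theta>. norm (f (rcis r \<theta>)) powr -\<kappa>))"
    by (simp add: I_def rcis_def cis_conv_exp powr_minus_divide)
  have "asymp_near1 (blowup_rate \<kappa>) I"
    unfolding I_eq using kappa_pos \<open>0 < \<eta>\<close> \<open>0 \<le> K\<close> sect1(4)
    by (intro asymp_near1_sandwich[OF kernel_integral_asymp kernel_integral_asymp _ _
          eventually_blowup_rate_nonneg I_lower I_upper]) auto
  then show ?thesis by (auto simp: blowup_rate_def[abs_def])
qed

end
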